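(* Let $n,m\ge1$ and let $p=p_{n,m}$ be stable of degree $n$ in $z$ and $m$ in $w$. Define $$L(z,w;\eta)=z^n\,\frac{p(z,w)\overline{p(1/\bar z,\eta)}-\tilde p(z,w)\overline{\tilde p(1/\bar z,\eta)}}{1-w\bar\eta}.$$ Then: (1) $L$ is a polynomial in $(z,w,\bar\eta)$, of degree at most $2n$ in $z$, at most $m-1$ in $w$ and at most $m-1$ in $\bar\eta$; (2) as $\eta$ ranges over $\mathbb{C}$, the polynomials $L(\cdot,\cdot;\eta)$ span a vector space of dimension exactly $m$; (3) $L(z,w;\eta)=z^{2n}(w\bar\eta)^{m-1}\overline{L(1/\bar z,1/\bar w;1/\bar\eta)}$; consequently, writing $L(z,w;\eta)=\sum_{j=0}^{m-1}a_j(z,w)\bar\eta^j$, one has $a_k(z,w)=z^{2n}w^{m-1}\overline{a_{m-k-1}(1/\bar z,1/\bar w)}$ for $0\le k\le m-1$; (4) there are polynomials $A(z,w;\eta)$, $B(z,w;\eta)$ in $(z,w,\bar\eta)$, of degree at most $n$ in $z$, at most $m-1$ in $w$ and at most $m-1$ in $\bar\eta$, such that $L=p\,A+\tilde p\,B$.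
   Context: A polynomial $p\in\mathbb{C}[z,w]$ is stable if $p(z,w)\neq0$ whenever $|z|\le1,|w|\le1$. The reflection is $\tilde p(z,w)=z^nw^m\overline{p(1/\bar z,1/\bar w)}$. Here $\eta\in\mathbb{C}$ is a parameter and the expression for $L$ is understood as a rational function in $z,w,\bar\eta$. *)

theory Defs
  imports Complex_Main "HOL-Library.Function_Algebras"
begin

definition bpoly :: "(nat \<Rightarrow> nat \<Rightarrow> complex) \<Rightarrow> nat \<Rightarrow> nat \<Rightarrow> complex \<Rightarrow> complex \<Rightarrow> complex" where
  "bpoly c n m z w = (\<Sum>i\<le>n. \<Sum>j\<le>m. c i j * z ^ i * w ^ j)"

text \<open>Reflection z^n w^m conj(p(1/conj z, 1/conj w)), written out coefficientwise
  (so that it is a polynomial defined everywhere).\<close>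
definition brefl :: "(nat \<Rightarrow> nat \<Rightarrow> complex) \<Rightarrow> nat \<Rightarrow> nat \<Rightarrow> complex \<Rightarrow> complex \<Rightarrow> complex" where
  "brefl c n m z w = (\<Sum>i\<le>n. \<Sum>j\<le>m. cnj (c i j) * z ^ (n - i) * w ^ (m - j))"

definition has_bidegree :: "(nat \<Rightarrow> nat \<Rightarrow> complex) \<Rightarrow> nat \<Rightarrow> nat \<Rightarrow> bool" where
  "has_bidegree c n m \<longleftrightarrow> (\<exists>j\<le>m. c n j \<noteq> 0) \<and> (\<exists>i\<le>n. c i m \<noteq> 0)"

definition stable :: "(nat \<Rightarrow> nat \<Rightarrow> complex) \<Rightarrow> nat \<Rightarrow> nat \<Rightarrow> bool" where
  "stable c n m \<longleftrightarrow> (\<forall>z w. cmod z \<le> 1 \<longrightarrow> cmod w \<le> 1 \<longrightarrow> bpoly c n m z w \<noteq> 0)"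

definition Lfun :: "(nat \<Rightarrow> nat \<Rightarrow> complex) \<Rightarrow> nat \<Rightarrow> nat \<Rightarrow> complex \<Rightarrow> complex \<Rightarrow> complex \<Rightarrow> complex" where
  "Lfun c n m z w \<eta> = z ^ n *
     (bpoly c n m z w * cnj (bpoly c n m (1 / cnj z) \<eta>)
      - brefl c n m z w * cnj (brefl c n m (1 / cnj z) \<eta>)) / (1 - w * cnj \<eta>)"

text \<open>Trivariate polynomial in (z,w,e) with degree bounds a,b,d; e plays the role of conj eta.\<close>
definition tpoly :: "(nat \<Rightarrow> nat \<Rightarrow> nat \<Rightarrow> complex) \<Rightarrow> nat \<Rightarrow> nat \<Rightarrow> nat \<Rightarrow> complex \<Rightarrow> complex \<Rightarrow> complex \<Rightarrow> complex" where
  "tpoly l a b d z w e = (\<Sum>i\<le>a. \<Sum>j\<le>b. \<Sum>k\<le>d. l i j k * z ^ i * w ^ j * e ^ k)"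

definition tcoeff :: "(nat \<Rightarrow> nat \<Rightarrow> nat \<Rightarrow> complex) \<Rightarrow> nat \<Rightarrow> nat \<Rightarrow> nat \<Rightarrow> complex \<Rightarrow> complex \<Rightarrow> complex" where
  "tcoeff l a b k z w = (\<Sum>i\<le>a. \<Sum>j\<le>b. l i j k * z ^ i * w ^ j)"

definition fscale :: "complex \<Rightarrow> ('a \<Rightarrow> complex) \<Rightarrow> ('a \<Rightarrow> complex)" where
  "fscale a f = (\<lambda>x. a * f x)"

end

theory Submission
  imports Defs
    "HOL-Computational_Algebra.Polynomial_Factorial"
    "HOL-Computational_Algebra.Field_as_Ring"
    "HOL-Computational_Algebra.Fundamental_Theorem_Algebra"
begin

(* Write e for conj eta.  Multiplying the two conjugated factors of L by z^n turns them into
   polynomials p_reflz, pt_reflz in (z, e), so the numerator of L is the polynomial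
     Lnum = p * p_reflz - pt * pt_reflz       (pt the reflection of p),
   and a monomial expansion shows that every term of Lnum is divisible by 1 - w e; the explicit
   quotient Lpoly is a polynomial of the required degrees, which gives (1).
   (3): reflection maps p <-> pt and p_reflz <-> pt_reflz, so Lnum is anti-self-reflexive; the
   denominator 1 - w e changes sign under reflection, so Lpoly is self-reflexive wherever
   w e <> 1.  Comparing coefficients in e (an identity of polynomials off a finite set of e
   holds everywhere) yields the coefficient symmetry and then (3) everywhere.
   (4): explicit geometric sums A, B satisfy (1 - w e) A = p_reflz - e^m pt and
   (1 - w e) B = e^m p - pt_reflz, hence (1 - w e)(p A + pt B) = Lnum; again extend across w e = 1.
   (2): the span lies in the span of the m coefficients a_k(z,w) of e^k.  Conversely, at z = 1
   the coefficients satisfy a_s = sum_{k<=s} w^(s-k) N_k (division by 1 - w e); a vanishing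
   combination of them gives P B = Q A in one variable with P = p(1,.) stable, Q its reflection
   and deg B < m = deg Q.  Stability makes P, Q coprime, so B = 0, and a triangular system
   forces the combination to be trivial; a Vandermonde argument at eta = 0..m-1 gives dim = m. *)

definition is_tpoly :: "nat \<Rightarrow> nat \<Rightarrow> nat \<Rightarrow> (complex \<Rightarrow> complex \<Rightarrow> complex \<Rightarrow> complex) \<Rightarrow> bool" where
  "is_tpoly a b d F \<longleftrightarrow> (\<exists>l. \<forall>z w e. F z w e = tpoly l a b d z w e)"

lemma is_tpoly_monomial:
  assumes "i \<le> a" "j \<le> b" "k \<le> d"
  shows "is_tpoly a b d (\<lambda>z w e. z^i * w^j * e^k)"
  unfolding is_tpoly_def tpoly_def
proof (intro exI allI)
  fix z w e :: complex
  let ?l = "\<lambda>i' j' k'. if k' = k then if j' = j then if i' = i then 1 else 0 else 0 else 0 :: complex"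
  show "z^i * w^j * e^k = (\<Sum>i'\<le>a. \<Sum>j'\<le>b. \<Sum>k'\<le>d. ?l i' j' k' * z^i' * w^j' * e^k')"
    using assms by (simp add: if_distrib[where f="\<lambda>x. x * _"] cong: if_cong)
qed

lemma is_tpoly_add:
  assumes "is_tpoly a b d F" "is_tpoly a b d G"
  shows "is_tpoly a b d (\<lambda>z w e. F z w e + G z w e)"
proof -
  obtain l1 l2 where "\<And>z w e. F z w e = tpoly l1 a b d z w e" "\<And>z w e. G z w e = tpoly l2 a b d z w e"
    using assms unfolding is_tpoly_def by blast
  then show ?thesis unfolding is_tpoly_def tpoly_def
    by (intro exI[of _ "\<lambda>i j k. l1 i j k + l2 i j k"]) (simp add: distrib_right sum.distrib)
qed

lemma is_tpoly_scale:
  assumes "is_tpoly a b d F"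
  shows "is_tpoly a b d (\<lambda>z w e. c * F z w e)"
proof -
  obtain l where "\<And>z w e. F z w e = tpoly l a b d z w e"
    using assms unfolding is_tpoly_def by blast
  then show ?thesis unfolding is_tpoly_def tpoly_def
    by (intro exI[of _ "\<lambda>i j k. c * l i j k"]) (simp add: sum_distrib_left mult.assoc)
qed

lemma is_tpoly_sum:
  assumes "finite S" "\<And>x. x \<in> S \<Longrightarrow> is_tpoly a b d (F x)"
  shows "is_tpoly a b d (\<lambda>z w e. \<Sum>x\<in>S. F x z w e)"
  using assms
proof (induction S rule: finite_induct)
  case empty
  show ?case unfolding is_tpoly_def tpoly_def by (intro exI[of _ "\<lambda>_ _ _. 0"]) simp
next
  case (insert x S)
  then show ?case by (simp add: is_tpoly_add)
qed

lemma is_tpoly_cong: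
  "is_tpoly a b d F \<Longrightarrow> (\<And>z w e. G z w e = F z w e) \<Longrightarrow> is_tpoly a b d G"
  unfolding is_tpoly_def by simp

lemma tpoly_tcoeff: "tpoly l a b d z w e = (\<Sum>k\<le>d. tcoeff l a b k z w * e^k)"
proof -
  have "tpoly l a b d z w e = (\<Sum>i\<le>a. \<Sum>k\<le>d. \<Sum>j\<le>b. l i j k * z^i * w^j * e^k)"
    unfolding tpoly_def by (intro sum.cong refl sum.swap)
  also have "\<dots> = (\<Sum>k\<le>d. \<Sum>i\<le>a. \<Sum>j\<le>b. l i j k * z^i * w^j * e^k)"
    by (rule sum.swap)
  finally show ?thesis
    by (simp add: tcoeff_def sum_distrib_right)
qed

text \<open>Two polynomials in one variable that agree off a finite set have the same coefficients.
  This is how identities are extended across the exceptional set w e = 1.\<close>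

lemma polyfun_coeffs_eq_off_finite:
  fixes a b :: "nat \<Rightarrow> 'a::{idom,real_normed_div_algebra}"
  assumes "finite S" and eq: "\<And>x. x \<notin> S \<Longrightarrow> (\<Sum>i\<le>d. a i * x^i) = (\<Sum>i\<le>d. b i * x^i)"
  shows "\<forall>i\<le>d. a i = b i"
proof (rule ccontr)
  assume "\<not> (\<forall>i\<le>d. a i = b i)"
  then obtain i where "i \<le> d" "a i - b i \<noteq> 0" by auto
  then have "finite {x. (\<Sum>i\<le>d. (a i - b i) * x^i) = 0}"
    using polyfun_roots_finite[of "\<lambda>i. a i - b i" i d] by blast
  moreover have "- S \<subseteq> {x. (\<Sum>i\<le>d. (a i - b i) * x^i) = 0}"
    using eq by (auto simp: left_diff_distrib sum_subtractf)
  ultimately have "finite (S \<union> - S)"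
    using \<open>finite S\<close> finite_subset by blast
  then show False
    using infinite_UNIV_char_0[where 'a='a] by simp
qed

lemma finite_reciprocal_set: "finite {e :: 'a::field. w * e = 1}"
proof (rule finite_subset)
  show "{e. w * e = 1} \<subseteq> {1 / w}"
    by (auto simp: eq_divide_eq mult.commute)
qed simp

lemma tpoly_reflect_expand:
  assumes "e \<noteq> 0"
  shows "z^a * (w*e)^d * cnj (tpoly l a b d (1 / cnj z) (1 / cnj w) (1 / cnj e))
       = (\<Sum>k\<le>d. z^a * w^d * cnj (tcoeff l a b (d-k) (1 / cnj z) (1 / cnj w)) * e^k)"
proof -
  define R where "R k = z^a * w^d * cnj (tcoeff l a b k (1 / cnj z) (1 / cnj w))" for k
  have "z^a * (w*e)^d * cnj (tpoly l a b d (1 / cnj z) (1 / cnj w) (1 / cnj e))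
      = (\<Sum>k\<le>d. R k * (e^d * (1/e)^k))"
    unfolding tpoly_tcoeff cnj_sum sum_distrib_left R_def
    by (simp add: power_mult_distrib mult_ac)
  also have "\<dots> = (\<Sum>k\<le>d. R k * e^(d-k))"
    by (intro sum.cong refl) (simp add: assms power_diff power_one_over)
  also have "\<dots> = (\<Sum>k\<le>d. R (d-k) * e^k)"
    by (rule sum.reindex_bij_witness[where i="\<lambda>k. d - k" and j="\<lambda>k. d - k"]) auto
  finally show ?thesis unfolding R_def .
qed

lemma one_minus_times_geometric:
  fixes w e :: "'a::comm_ring_1"
  shows "(1 - w*e) * (\<Sum>r<t. w^(a+r) * e^(b+r)) = w^a * e^b - w^(a+t) * e^(b+t)"
proof -
  have "(\<Sum>r<t. w^(a+r) * e^(b+r)) = w^a * e^b * (\<Sum>r<t. (w*e)^r)"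
    by (simp add: sum_distrib_left power_add power_mult_distrib mult_ac)
  then have "(1 - w*e) * (\<Sum>r<t. w^(a+r) * e^(b+r)) = w^a * e^b * (1 - (w*e)^t)"
    by (simp add: one_diff_power_eq mult_ac)
  then show ?thesis
    by (simp add: algebra_simps power_add power_mult_distrib)
qed

definition geom_quot :: "nat \<Rightarrow> nat \<Rightarrow> nat \<Rightarrow> 'a::comm_ring_1 \<Rightarrow> 'a \<Rightarrow> 'a" where
  "geom_quot m j j' w e =
     (if j + j' \<le> m then (\<Sum>r<m-j-j'. w^(j+r) * e^(j'+r))
      else - (\<Sum>r<j+j'-m. w^(m-j'+r) * e^(m-j+r)))"

lemma geom_quot_mult:
  assumes "j \<le> m" "j' \<le> m"
  shows "(1 - w*e) * geom_quot m j j' w e = w^j * e^j' - w^(m-j') * e^(m-j)"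
proof (cases "j + j' \<le> m")
  case True
  then have "j + (m-j-j') = m - j'" "j' + (m-j-j') = m - j" by auto
  with True show ?thesis
    by (simp add: geom_quot_def one_minus_times_geometric)
next
  case False
  then have "m - j' + (j+j'-m) = j" "m - j + (j+j'-m) = j'" using assms by auto
  then show ?thesis
    unfolding geom_quot_def if_not_P[OF False] mult_minus_right one_minus_times_geometric
    by simp
qed

lemma is_tpoly_geom_quot_term:
  assumes "i \<le> a" "j \<le> m" "j' \<le> m"
  shows "is_tpoly a (m-1) (m-1) (\<lambda>z w e. k * z^i * geom_quot m j j' w e)"
proof (cases "j + j' \<le> m")
  case True
  have "is_tpoly a (m-1) (m-1) (\<lambda>z w e. \<Sum>r\<in>{..<m-j-j'}. k * (z^i * w^(j+r) * e^(j'+r)))"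
    using assms by (intro is_tpoly_sum is_tpoly_scale is_tpoly_monomial) auto
  then show ?thesis
    by (rule is_tpoly_cong) (use True in \<open>simp add: geom_quot_def sum_distrib_left mult_ac\<close>)
next
  case False
  have "is_tpoly a (m-1) (m-1) (\<lambda>z w e. \<Sum>r\<in>{..<j+j'-m}. (-k) * (z^i * w^(m-j'+r) * e^(m-j+r)))"
    using assms by (intro is_tpoly_sum is_tpoly_scale is_tpoly_monomial) auto
  then show ?thesis
    by (rule is_tpoly_cong) (use False in \<open>simp add: geom_quot_def sum_distrib_left mult_ac sum_negf\<close>)
qed

text \<open>The conjugated factors of L after multiplication by z^n, as polynomials in (z, e) with
  e = conj eta: p_reflz is z^n conj(p(1/conj z, eta)) and pt_reflz is z^n conj(pt(1/conj z, eta)).\<close>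

definition p_reflz :: "(nat \<Rightarrow> nat \<Rightarrow> complex) \<Rightarrow> nat \<Rightarrow> nat \<Rightarrow> complex \<Rightarrow> complex \<Rightarrow> complex" where
  "p_reflz c n m z e = (\<Sum>i\<le>n. \<Sum>j\<le>m. cnj (c i j) * z^(n-i) * e^j)"

definition pt_reflz :: "(nat \<Rightarrow> nat \<Rightarrow> complex) \<Rightarrow> nat \<Rightarrow> nat \<Rightarrow> complex \<Rightarrow> complex \<Rightarrow> complex" where
  "pt_reflz c n m z e = (\<Sum>i\<le>n. \<Sum>j\<le>m. c i j * z^i * e^(m-j))"

lemma bpoly_reflz:
  assumes "z \<noteq> 0"
  shows "z^n * cnj (bpoly c n m (1 / cnj z) \<eta>) = p_reflz c n m z (cnj \<eta>)"
  unfolding bpoly_def p_reflz_def cnj_sum sum_distrib_left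
  by (intro sum.cong refl) (simp add: assms power_diff power_one_over)

lemma brefl_reflz:
  assumes "z \<noteq> 0"
  shows "z^n * cnj (brefl c n m (1 / cnj z) \<eta>) = pt_reflz c n m z (cnj \<eta>)"
  unfolding brefl_def pt_reflz_def cnj_sum sum_distrib_left
  by (intro sum.cong refl) (simp add: assms power_diff power_one_over)

lemma bpoly_reflect:
  assumes "z \<noteq> 0" "w \<noteq> 0"
  shows "z^n * w^m * cnj (bpoly c n m (1 / cnj z) (1 / cnj w)) = brefl c n m z w"
  unfolding bpoly_def brefl_def cnj_sum sum_distrib_left
  by (intro sum.cong refl) (simp add: assms power_diff power_one_over)

lemma brefl_reflect:
  assumes "z \<noteq> 0" "w \<noteq> 0"
  shows "z^n * w^m * cnj (brefl c n m (1 / cnj z) (1 / cnj w)) = bpoly c n m z w"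
  unfolding bpoly_def brefl_def cnj_sum sum_distrib_left
  by (intro sum.cong refl) (simp add: assms power_diff power_one_over)

lemma p_reflz_reflect:
  assumes "z \<noteq> 0" "e \<noteq> 0"
  shows "z^n * e^m * cnj (p_reflz c n m (1 / cnj z) (1 / cnj e)) = pt_reflz c n m z e"
  unfolding p_reflz_def pt_reflz_def cnj_sum sum_distrib_left
  by (intro sum.cong refl) (simp add: assms power_diff power_one_over)

lemma pt_reflz_reflect:
  assumes "z \<noteq> 0" "e \<noteq> 0"
  shows "z^n * e^m * cnj (pt_reflz c n m (1 / cnj z) (1 / cnj e)) = p_reflz c n m z e"
  unfolding p_reflz_def pt_reflz_def cnj_sum sum_distrib_left
  by (intro sum.cong refl) (simp add: assms power_diff power_one_over)

definition Lnum :: "(nat \<Rightarrow> nat \<Rightarrow> complex) \<Rightarrow> nat \<Rightarrow> nat \<Rightarrow> complex \<Rightarrow> complex \<Rightarrow> complex \<Rightarrow> complex" where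
  "Lnum c n m z w e = bpoly c n m z w * p_reflz c n m z e - brefl c n m z w * pt_reflz c n m z e"

lemma Lnum_expand:
  "Lnum c n m z w e = (\<Sum>i\<le>n. \<Sum>j\<le>m. \<Sum>i'\<le>n. \<Sum>j'\<le>m.
      c i j * cnj (c i' j') * z^(n-i'+i) * (w^j * e^j' - w^(m-j') * e^(m-j)))"
proof -
  have "bpoly c n m z w * p_reflz c n m z e = p_reflz c n m z e * bpoly c n m z w"
    by (rule mult.commute)
  also have "\<dots> = (\<Sum>i\<le>n. \<Sum>j\<le>m. \<Sum>i'\<le>n. \<Sum>j'\<le>m.
      c i j * cnj (c i' j') * z^(n-i'+i) * (w^j * e^j'))"
    unfolding bpoly_def p_reflz_def sum_distrib_left sum_distrib_right
    by (intro sum.cong refl) (simp add: mult_ac add.commute flip: power_add)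
  finally have P: "bpoly c n m z w * p_reflz c n m z e = (\<Sum>i\<le>n. \<Sum>j\<le>m. \<Sum>i'\<le>n. \<Sum>j'\<le>m.
      c i j * cnj (c i' j') * z^(n-i'+i) * (w^j * e^j'))" .
  have "brefl c n m z w * pt_reflz c n m z e = (\<Sum>i\<le>n. \<Sum>j\<le>m. \<Sum>i'\<le>n. \<Sum>j'\<le>m.
      c i j * cnj (c i' j') * z^(n-i'+i) * (w^(m-j') * e^(m-j)))"
    unfolding brefl_def pt_reflz_def sum_distrib_left sum_distrib_right
    by (intro sum.cong refl) (simp add: mult_ac add.commute flip: power_add)
  then show ?thesis
    unfolding Lnum_def P by (simp add: sum_subtractf right_diff_distrib)
qed

lemma Lnum_antisymmetric:
  assumes "z \<noteq> 0" "w \<noteq> 0" "e \<noteq> 0"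
  shows "z^(2*n) * (w*e)^m * cnj (Lnum c n m (1 / cnj z) (1 / cnj w) (1 / cnj e)) = - Lnum c n m z w e"
proof -
  let ?z = "1 / cnj z" and ?w = "1 / cnj w" and ?e = "1 / cnj e"
  have "z^(2*n) * (w*e)^m * cnj (Lnum c n m ?z ?w ?e)
      = (z^n * w^m * cnj (bpoly c n m ?z ?w)) * (z^n * e^m * cnj (p_reflz c n m ?z ?e))
        - (z^n * w^m * cnj (brefl c n m ?z ?w)) * (z^n * e^m * cnj (pt_reflz c n m ?z ?e))"
    unfolding Lnum_def complex_cnj_diff complex_cnj_mult mult_2 power_add power_mult_distrib
    by (simp only: ring_distribs mult_ac)
  also have "\<dots> = brefl c n m z w * pt_reflz c n m z e - bpoly c n m z w * p_reflz c n m z e"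
    using assms by (simp add: bpoly_reflect brefl_reflect p_reflz_reflect pt_reflz_reflect)
  finally show ?thesis
    by (simp add: Lnum_def)
qed

definition Lpoly :: "(nat \<Rightarrow> nat \<Rightarrow> complex) \<Rightarrow> nat \<Rightarrow> nat \<Rightarrow> complex \<Rightarrow> complex \<Rightarrow> complex \<Rightarrow> complex" where
  "Lpoly c n m z w e = (\<Sum>i\<le>n. \<Sum>j\<le>m. \<Sum>i'\<le>n. \<Sum>j'\<le>m.
      c i j * cnj (c i' j') * z^(n-i'+i) * geom_quot m j j' w e)"

lemma Lpoly_mult: "(1 - w*e) * Lpoly c n m z w e = Lnum c n m z w e"
  unfolding Lpoly_def Lnum_expand sum_distrib_left
  by (intro sum.cong refl) (simp add: mult.left_commute[of "1 - w*e"] geom_quot_mult)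

lemma is_tpoly_Lpoly: "is_tpoly (2*n) (m-1) (m-1) (Lpoly c n m)"
proof -
  have "is_tpoly (2*n) (m-1) (m-1) (\<lambda>z w e. \<Sum>i\<in>{..n}. \<Sum>j\<in>{..m}. \<Sum>i'\<in>{..n}. \<Sum>j'\<in>{..m}.
      (c i j * cnj (c i' j')) * z^(n-i'+i) * geom_quot m j j' w e)"
    by (intro is_tpoly_sum is_tpoly_geom_quot_term finite_atMost) auto
  then show ?thesis
    by (rule is_tpoly_cong) (simp add: Lpoly_def)
qed

lemma Lfun_eq_Lpoly:
  assumes "z \<noteq> 0" "w * cnj \<eta> \<noteq> 1"
  shows "Lfun c n m z w \<eta> = Lpoly c n m z w (cnj \<eta>)"
proof -
  have "z^n * (bpoly c n m z w * cnj (bpoly c n m (1 / cnj z) \<eta>) - brefl c n m z w * cnj (brefl c n m (1 / cnj z) \<eta>))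
     = bpoly c n m z w * (z^n * cnj (bpoly c n m (1 / cnj z) \<eta>))
       - brefl c n m z w * (z^n * cnj (brefl c n m (1 / cnj z) \<eta>))"
    by (simp add: algebra_simps)
  also have "\<dots> = Lnum c n m z w (cnj \<eta>)"
    using assms(1) by (simp add: Lnum_def bpoly_reflz brefl_reflz)
  finally have "Lfun c n m z w \<eta> = Lnum c n m z w (cnj \<eta>) / (1 - w * cnj \<eta>)"
    by (simp add: Lfun_def)
  also have "\<dots> = Lpoly c n m z w (cnj \<eta>)"
    using assms(2) by (simp add: Lpoly_mult[symmetric])
  finally show ?thesis .
qed

text \<open>Self-reflexivity of Lpoly away from w e = 1, from the anti-symmetry of Lnum.\<close>

lemma Lpoly_reflect_off_diagonal:
  assumes "z \<noteq> 0" "w \<noteq> 0" "e \<noteq> 0" "w * e \<noteq> 1" "m \<ge> 1"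
  shows "Lpoly c n m z w e = z^(2*n) * (w*e)^(m-1) * cnj (Lpoly c n m (1 / cnj z) (1 / cnj w) (1 / cnj e))"
proof -
  define X where "X = cnj (Lpoly c n m (1 / cnj z) (1 / cnj w) (1 / cnj e))"
  define N' where "N' = cnj (Lnum c n m (1 / cnj z) (1 / cnj w) (1 / cnj e))"
  have "cnj ((1 - (1 / cnj w) * (1 / cnj e)) * Lpoly c n m (1 / cnj z) (1 / cnj w) (1 / cnj e)) = N'"
    unfolding Lpoly_mult N'_def ..
  then have "(1 - 1 / (w*e)) * X = N'"
    by (simp add: X_def)
  then have X: "(w*e - 1) * X = w * e * N'"
    using assms(2,3) by (simp add: field_simps)
  have "(1 - w*e) * (z^(2*n) * (w*e)^(m-1) * X) = - (z^(2*n) * (w*e)^(m-1) * ((w*e - 1) * X))"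
    by (simp add: algebra_simps)
  also have "\<dots> = - (z^(2*n) * ((w*e)^(m-1) * (w*e)) * N')"
    unfolding X by (simp add: mult_ac)
  also have "\<dots> = - (z^(2*n) * (w*e)^m * N')"
    using assms(5) by (simp only: power_minus_mult)
  also have "\<dots> = (1 - w*e) * Lpoly c n m z w e"
    using Lnum_antisymmetric[OF assms(1-3)] Lpoly_mult[of w e c n m z] by (simp add: N'_def)
  finally show ?thesis
    using assms(4) by (simp add: X_def)
qed

lemma tcoeff_reflect:
  assumes m: "m \<ge> 1" and L: "\<And>z w e. Lpoly c n m z w e = tpoly l (2*n) (m-1) (m-1) z w e"
    and z: "z \<noteq> 0" and w: "w \<noteq> 0" and k: "k \<le> m-1"
  shows "tcoeff l (2*n) (m-1) k z w
       = z^(2*n) * w^(m-1) * cnj (tcoeff l (2*n) (m-1) (m-k-1) (1 / cnj z) (1 / cnj w))"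
proof -
  define T where "T j = tcoeff l (2*n) (m-1) j z w" for j
  define R where "R j = z^(2*n) * w^(m-1) * cnj (tcoeff l (2*n) (m-1) j (1 / cnj z) (1 / cnj w))" for j
  have "\<forall>j\<le>m-1. T j = R (m-1-j)"
  proof (rule polyfun_coeffs_eq_off_finite)
    show "finite ({0} \<union> {e. w * e = 1})"
      using finite_reciprocal_set by simp
  next
    fix e assume "e \<notin> {0} \<union> {e. w * e = 1}"
    then have e: "e \<noteq> 0" "w * e \<noteq> 1" by auto
    have "(\<Sum>j\<le>m-1. T j * e^j) = Lpoly c n m z w e"
      unfolding L tpoly_tcoeff T_def ..
    also have "\<dots> = z^(2*n) * (w*e)^(m-1) * cnj (Lpoly c n m (1 / cnj z) (1 / cnj w) (1 / cnj e))"
      using Lpoly_reflect_off_diagonal[OF z w e m] .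
    also have "\<dots> = (\<Sum>j\<le>m-1. R (m-1-j) * e^j)"
      unfolding L tpoly_reflect_expand[OF e(1)] R_def ..
    finally show "(\<Sum>j\<le>m-1. T j * e^j) = (\<Sum>j\<le>m-1. R (m-1-j) * e^j)" .
  qed
  then show ?thesis
    using k by (simp add: T_def R_def)
qed

lemma tpoly_reflect:
  assumes m: "m \<ge> 1" and L: "\<And>z w e. Lpoly c n m z w e = tpoly l (2*n) (m-1) (m-1) z w e"
    and z: "z \<noteq> 0" and w: "w \<noteq> 0" and e: "e \<noteq> 0"
  shows "tpoly l (2*n) (m-1) (m-1) z w e
       = z^(2*n) * (w*e)^(m-1) * cnj (tpoly l (2*n) (m-1) (m-1) (1 / cnj z) (1 / cnj w) (1 / cnj e))"
proof -
  have "tpoly l (2*n) (m-1) (m-1) z w e = (\<Sum>k\<le>m-1. tcoeff l (2*n) (m-1) k z w * e^k)"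
    by (rule tpoly_tcoeff)
  also have "\<dots> = (\<Sum>k\<le>m-1. z^(2*n) * w^(m-1)
                     * cnj (tcoeff l (2*n) (m-1) (m-1-k) (1 / cnj z) (1 / cnj w)) * e^k)"
  proof (intro sum.cong refl)
    fix k assume "k \<in> {..m-1}"
    then show "tcoeff l (2*n) (m-1) k z w * e^k = z^(2*n) * w^(m-1)
                 * cnj (tcoeff l (2*n) (m-1) (m-1-k) (1 / cnj z) (1 / cnj w)) * e^k"
      using tcoeff_reflect[OF m L z w, of k] by (simp add: diff_commute)
  qed
  also have "\<dots> = z^(2*n) * (w*e)^(m-1) * cnj (tpoly l (2*n) (m-1) (m-1) (1 / cnj z) (1 / cnj w) (1 / cnj e))"
    by (rule tpoly_reflect_expand[OF e, symmetric])
  finally show ?thesis .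
qed

definition Apoly :: "(nat \<Rightarrow> nat \<Rightarrow> complex) \<Rightarrow> nat \<Rightarrow> nat \<Rightarrow> complex \<Rightarrow> complex \<Rightarrow> complex \<Rightarrow> complex" where
  "Apoly c n m z w e = (\<Sum>i\<le>n. \<Sum>j\<le>m. \<Sum>r<m-j. cnj (c i j) * (z^(n-i) * w^r * e^(j+r)))"

definition Bpoly :: "(nat \<Rightarrow> nat \<Rightarrow> complex) \<Rightarrow> nat \<Rightarrow> nat \<Rightarrow> complex \<Rightarrow> complex \<Rightarrow> complex \<Rightarrow> complex" where
  "Bpoly c n m z w e = (\<Sum>i\<le>n. \<Sum>j\<le>m. \<Sum>r<j. (- c i j) * (z^i * w^r * e^(m-j+r)))"

lemma Apoly_mult: "(1 - w*e) * Apoly c n m z w e = p_reflz c n m z e - e^m * brefl c n m z w"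
proof -
  have "(1 - w*e) * Apoly c n m z w e
      = (\<Sum>i\<le>n. \<Sum>j\<le>m. cnj (c i j) * z^(n-i) * ((1 - w*e) * (\<Sum>r<m-j. w^(0+r) * e^(j+r))))"
    unfolding Apoly_def sum_distrib_left by (intro sum.cong refl) (simp add: mult_ac)
  also have "\<dots> = (\<Sum>i\<le>n. \<Sum>j\<le>m. cnj (c i j) * z^(n-i) * (e^j - w^(m-j) * e^m))"
    by (intro sum.cong refl) (simp only: one_minus_times_geometric; simp)
  finally show ?thesis
    unfolding p_reflz_def brefl_def sum_distrib_left sum_subtractf[symmetric]
    by (simp add: algebra_simps)
qed

lemma Bpoly_mult: "(1 - w*e) * Bpoly c n m z w e = e^m * bpoly c n m z w - pt_reflz c n m z e"
proof -
  have "(1 - w*e) * Bpoly c n m z w e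
      = (\<Sum>i\<le>n. \<Sum>j\<le>m. (- c i j) * z^i * ((1 - w*e) * (\<Sum>r<j. w^(0+r) * e^(m-j+r))))"
    unfolding Bpoly_def sum_distrib_left by (intro sum.cong refl) (simp add: mult_ac)
  also have "\<dots> = (\<Sum>i\<le>n. \<Sum>j\<le>m. (- c i j) * z^i * (e^(m-j) - w^j * e^m))"
    by (intro sum.cong refl) (simp only: one_minus_times_geometric; simp)
  finally show ?thesis
    unfolding pt_reflz_def bpoly_def sum_distrib_left sum_subtractf[symmetric]
    by (simp add: algebra_simps)
qed

lemma is_tpoly_Apoly: "is_tpoly n (m-1) (m-1) (Apoly c n m)"
proof -
  have "is_tpoly n (m-1) (m-1) (\<lambda>z w e. \<Sum>i\<in>{..n}. \<Sum>j\<in>{..m}. \<Sum>r\<in>{..<m-j}.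
      cnj (c i j) * (z^(n-i) * w^r * e^(j+r)))"
    by (intro is_tpoly_sum is_tpoly_scale is_tpoly_monomial finite_atMost finite_lessThan) auto
  then show ?thesis
    by (rule is_tpoly_cong) (simp add: Apoly_def)
qed

lemma is_tpoly_Bpoly: "is_tpoly n (m-1) (m-1) (Bpoly c n m)"
proof -
  have "is_tpoly n (m-1) (m-1) (\<lambda>z w e. \<Sum>i\<in>{..n}. \<Sum>j\<in>{..m}. \<Sum>r\<in>{..<j}.
      (- c i j) * (z^i * w^r * e^(m-j+r)))"
    by (intro is_tpoly_sum is_tpoly_scale is_tpoly_monomial finite_atMost finite_lessThan) auto
  then show ?thesis
    by (rule is_tpoly_cong) (simp add: Bpoly_def)
qed

lemma Lpoly_decomposition_off_diagonal:
  assumes "w * e \<noteq> 1"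
  shows "Lpoly c n m z w e = bpoly c n m z w * Apoly c n m z w e + brefl c n m z w * Bpoly c n m z w e"
proof -
  have "(1 - w*e) * (bpoly c n m z w * Apoly c n m z w e + brefl c n m z w * Bpoly c n m z w e)
      = bpoly c n m z w * ((1 - w*e) * Apoly c n m z w e) + brefl c n m z w * ((1 - w*e) * Bpoly c n m z w e)"
    by (simp add: algebra_simps)
  also have "\<dots> = Lnum c n m z w e"
    unfolding Apoly_mult Bpoly_mult Lnum_def by (simp add: algebra_simps)
  also have "\<dots> = (1 - w*e) * Lpoly c n m z w e"
    by (rule Lpoly_mult[symmetric])
  finally show ?thesis
    using assms by simp
qed

lemma tpoly_decomposition:
  assumes L: "\<And>z w e. Lpoly c n m z w e = tpoly l (2*n) (m-1) (m-1) z w e"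
    and A: "\<And>z w e. Apoly c n m z w e = tpoly lA n (m-1) (m-1) z w e"
    and B: "\<And>z w e. Bpoly c n m z w e = tpoly lB n (m-1) (m-1) z w e"
  shows "tpoly l (2*n) (m-1) (m-1) z w e
       = bpoly c n m z w * tpoly lA n (m-1) (m-1) z w e + brefl c n m z w * tpoly lB n (m-1) (m-1) z w e"
proof -
  define b where "b k = bpoly c n m z w * tcoeff lA n (m-1) k z w + brefl c n m z w * tcoeff lB n (m-1) k z w" for k
  have sum_b: "(\<Sum>k\<le>m-1. b k * x^k)
      = bpoly c n m z w * tpoly lA n (m-1) (m-1) z w x + brefl c n m z w * tpoly lB n (m-1) (m-1) z w x" for x
    unfolding b_def tpoly_tcoeff by (simp add: sum_distrib_left ring_distribs sum.distrib mult_ac)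
  have "\<forall>k\<le>m-1. tcoeff l (2*n) (m-1) k z w = b k"
  proof (rule polyfun_coeffs_eq_off_finite[OF finite_reciprocal_set])
    fix x assume "x \<notin> {x. w * x = 1}"
    then show "(\<Sum>k\<le>m-1. tcoeff l (2*n) (m-1) k z w * x^k) = (\<Sum>k\<le>m-1. b k * x^k)"
      unfolding sum_b tpoly_tcoeff[symmetric] L[symmetric] A[symmetric] B[symmetric]
      by (simp add: Lpoly_decomposition_off_diagonal)
  qed
  then show ?thesis
    unfolding tpoly_tcoeff[of l] sum_b[symmetric] by simp
qed

lemma coprime_if_no_common_root:
  fixes p q :: "'a::alg_closed_field poly"
  assumes "p \<noteq> 0" and no_common: "\<And>x. poly p x = 0 \<Longrightarrow> poly q x \<noteq> 0"
  shows "coprime p q"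
proof (rule coprimeI)
  fix d assume dvd: "d dvd p" "d dvd q"
  show "is_unit d"
  proof (rule ccontr)
    assume "\<not> is_unit d"
    moreover have "d \<noteq> 0"
      using dvd(1) assms(1) by auto
    ultimately have "degree d > 0"
      by (simp add: is_unit_iff_degree)
    then obtain x where "poly d x = 0"
      using alg_closed_imp_poly_has_root by blast
    with dvd have "poly p x = 0" "poly q x = 0"
      by (auto elim: dvdE)
    with no_common show False
      by blast
  qed
qed

text \<open>Key one-variable fact: if P has no zero in the closed unit disc and Q(x) = x^m conj(P(1/conj x))
  has degree m, then P B = Q A with deg B < m forces B = 0.  Indeed P and Q are coprime, as the
  roots of P lie outside and those of Q inside the open disc.\<close>

lemma stable_poly_cancel_reflection:
  fixes P Q A B :: "complex poly"
  assumes stable: "\<And>x. cmod x \<le> 1 \<Longrightarrow> poly P x \<noteq> 0"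
    and reflection: "\<And>x. x \<noteq> 0 \<Longrightarrow> poly Q x = x^m * cnj (poly P (1 / cnj x))"
    and lead: "coeff Q m \<noteq> 0"
    and eq: "P * B = Q * A" and deg: "degree B < m"
  shows "B = 0"
proof (rule ccontr)
  assume "B \<noteq> 0"
  have "P \<noteq> 0"
    using stable[of 0] by auto
  moreover have "poly Q x \<noteq> 0" if "poly P x = 0" for x
  proof -
    have "cmod x > 1"
      using stable[of x] that by force
    then have "x \<noteq> 0" "cmod (1 / cnj x) \<le> 1"
      by (auto simp: norm_divide divide_le_eq)
    then show ?thesis
      using stable[of "1 / cnj x"] reflection by simp
  qed
  ultimately have "coprime Q P"
    using coprime_if_no_common_root coprime_commute by blast
  moreover have "Q dvd P * B"
    using eq by simp
  ultimately have "Q dvd B"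
    by (simp add: coprime_dvd_mult_right_iff)
  then have "degree Q \<le> degree B"
    using \<open>B \<noteq> 0\<close> by (rule dvd_imp_degree_le)
  moreover have "m \<le> degree Q"
    using lead by (rule le_degree)
  ultimately show False
    using deg by simp
qed

text \<open>The polynomial sum_{s<m} u_s sum_{k<=s} b_k x^(s-k): it has degree below m, and its
  coefficients form a triangular system in u with diagonal b_0.\<close>

definition trunc_conv :: "(nat \<Rightarrow> 'a::comm_ring_1) \<Rightarrow> (nat \<Rightarrow> 'a) \<Rightarrow> nat \<Rightarrow> 'a poly" where
  "trunc_conv u b m = (\<Sum>s<m. \<Sum>k\<le>s. monom (u s * b k) (s-k))"

lemma poly_trunc_conv: "poly (trunc_conv u b m) x = (\<Sum>s<m. \<Sum>k\<le>s. u s * b k * x^(s-k))"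
  by (simp add: trunc_conv_def poly_sum poly_monom)

lemma coeff_trunc_conv:
  "coeff (trunc_conv u b m) t = (\<Sum>s<m. if t \<le> s then u s * b (s-t) else 0)"
  unfolding trunc_conv_def coeff_sum coeff_monom
proof (intro sum.cong refl)
  fix s
  have "(\<Sum>k\<le>s. if s - k = t then u s * b k else 0) = (\<Sum>k\<le>s. if k = s - t \<and> t \<le> s then u s * b k else 0)"
    by (intro sum.cong refl) auto
  also have "\<dots> = (if t \<le> s then u s * b (s-t) else 0)"
    by (cases "t \<le> s") (simp_all add: sum.delta)
  finally show "(\<Sum>k\<le>s. if s - k = t then u s * b k else 0) = (if t \<le> s then u s * b (s-t) else 0)" .
qed

lemma degree_trunc_conv: "m \<ge> 1 \<Longrightarrow> degree (trunc_conv u b m) < m"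
  using degree_le[of "m-1" "trunc_conv u b m"] by (force simp: coeff_trunc_conv intro!: sum.neutral)

lemma trunc_conv_eq_0:
  fixes u b :: "nat \<Rightarrow> 'a::idom"
  assumes "trunc_conv u b m = 0" and "b 0 \<noteq> 0"
  shows "t < m \<Longrightarrow> u t = 0"
proof (induction "m - t" arbitrary: t rule: less_induct)
  case less
  have "0 = coeff (trunc_conv u b m) t"
    using assms(1) by simp
  also have "\<dots> = (\<Sum>s<m. if s = t then u t * b 0 else 0)"
    unfolding coeff_trunc_conv
  proof (intro sum.cong refl)
    fix s assume "s \<in> {..<m}"
    then have "t < s \<Longrightarrow> u s = 0"
      using less by auto
    then show "(if t \<le> s then u s * b (s-t) else 0) = (if s = t then u t * b 0 else 0)"
      by (cases "t < s") auto
  qed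
  also have "\<dots> = u t * b 0"
    using less(2) by simp
  finally show ?case
    using assms(2) by simp
qed

lemma coeffs_of_geometric_quotient:
  fixes a N :: "nat \<Rightarrow> 'a::{idom,real_normed_div_algebra}"
  assumes m: "m \<ge> 1"
    and eq: "\<And>e. (1 - w*e) * (\<Sum>k\<le>m-1. a k * e^k) = (\<Sum>s\<le>m. N s * e^s)"
  shows "s < m \<Longrightarrow> a s = (\<Sum>k\<le>s. w^(s-k) * N k)"
proof -
  define a' where "a' s = (if s < m then a s else 0)" for s
  define D where "D s = a' s - w * (if s = 0 then 0 else a (s-1))" for s
  have m_Suc: "m = Suc (m-1)"
    using m by simp
  have sum_split_last: "(\<Sum>s\<le>m. g s) = (\<Sum>s\<le>m-1. g s) + g m" for g :: "nat \<Rightarrow> 'a"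
    using m_Suc by (metis sum.atMost_Suc)
  have sum_split_first: "(\<Sum>s\<le>m. g s) = g 0 + (\<Sum>s\<le>m-1. g (Suc s))" for g :: "nat \<Rightarrow> 'a"
    using m_Suc by (metis sum.atMost_Suc_shift)
  have "(1 - w*e) * (\<Sum>k\<le>m-1. a k * e^k) = (\<Sum>s\<le>m. D s * e^s)" for e
  proof -
    have "(\<Sum>k\<le>m-1. a k * e^k) = (\<Sum>s\<le>m. a' s * e^s)"
      unfolding sum_split_last using m by (auto simp: a'_def intro!: sum.cong)
    moreover have "w * e * (\<Sum>k\<le>m-1. a k * e^k) = (\<Sum>s\<le>m. w * (if s = 0 then 0 else a (s-1)) * e^s)"
      unfolding sum_split_first by (simp add: sum_distrib_left mult_ac)
    ultimately show ?thesis
      by (simp add: D_def left_diff_distrib sum_subtractf)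
  qed
  then have D: "s \<le> m \<Longrightarrow> D s = N s" for s
    using eq polyfun_eq_coeffs[where c=D and d=N and n=m] by metis
  show "s < m \<Longrightarrow> a s = (\<Sum>k\<le>s. w^(s-k) * N k)"
  proof (induction s)
    case 0
    then show ?case
      using D[of 0] by (simp add: D_def a'_def)
  next
    case (Suc s)
    then have "a (Suc s) = N (Suc s) + w * (\<Sum>k\<le>s. w^(s-k) * N k)"
      using D[of "Suc s"] by (simp add: D_def a'_def algebra_simps)
    also have "\<dots> = (\<Sum>k\<le>Suc s. w^(Suc s-k) * N k)"
      by (simp add: sum_distrib_left mult_ac Suc_diff_le)
    finally show ?case .
  qed
qed

lemma vandermonde_injective:
  fixes \<mu> :: "nat \<Rightarrow> 'a::field_char_0"
  assumes moments: "\<And>k. k < m \<Longrightarrow> (\<Sum>t<m. \<mu> t * of_nat t ^ k) = 0" and s: "s < m"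
  shows "\<mu> s = 0"
proof -
  define S where "S = {..<m} - {s}"
  define \<pi> where "\<pi> = (\<Prod>t\<in>S. [:- of_nat t, 1:] :: 'a poly)"
  have "degree \<pi> \<le> m - 1"
    using degree_prod_sum_le[of S "\<lambda>t. [:- of_nat t, 1:] :: 'a poly"] s by (simp add: \<pi>_def S_def)
  then have poly_\<pi>: "poly \<pi> x = (\<Sum>k\<le>m-1. coeff \<pi> k * x^k)" for x
    by (simp add: poly_altdef sum.mono_neutral_left coeff_eq_0)
  have "(\<Sum>t<m. \<mu> t * poly \<pi> (of_nat t)) = (\<Sum>k\<le>m-1. coeff \<pi> k * (\<Sum>t<m. \<mu> t * of_nat t ^ k))"
    unfolding poly_\<pi> sum_distrib_left by (subst sum.swap) (simp add: mult_ac)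
  also have "\<dots> = 0"
    using moments s by (intro sum.neutral) auto
  also have "(\<Sum>t<m. \<mu> t * poly \<pi> (of_nat t)) = \<mu> s * poly \<pi> (of_nat s) + (\<Sum>t\<in>S. \<mu> t * poly \<pi> (of_nat t))"
    using s unfolding S_def by (simp add: sum.remove)
  also have "(\<Sum>t\<in>S. \<mu> t * poly \<pi> (of_nat t)) = 0"
    by (intro sum.neutral) (auto simp: \<pi>_def poly_prod S_def)
  finally have "\<mu> s * poly \<pi> (of_nat s) = 0"
    by simp
  moreover have "poly \<pi> (of_nat s) \<noteq> 0"
    by (auto simp: \<pi>_def S_def poly_prod)
  ultimately show ?thesis
    by simp
qed

lemma vector_space_fscale: "vector_space (fscale :: complex \<Rightarrow> ('a \<Rightarrow> complex) \<Rightarrow> _)"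
  by unfold_locales (auto simp: fscale_def fun_eq_iff algebra_simps)

lemma sum_fun_apply: "(\<Sum>a\<in>A. f a) x = (\<Sum>a\<in>A. f a x)"
  by (induction A rule: infinite_finite_induct) auto

lemma (in vector_space) dim_eq_of_independent_family:
  assumes spanning: "V \<subseteq> span (\<alpha> ` {..<m})"
    and family: "v ` {..<m} \<subseteq> V"
    and indep: "\<And>\<mu>. (\<Sum>t<m. \<mu> t *s v t) = 0 \<Longrightarrow> \<forall>t<m. \<mu> t = 0"
  shows "dim V = m"
proof (rule antisym)
  have "dim V \<le> card (\<alpha> ` {..<m})"
    using spanning by (rule dim_le_card) simp
  also have "\<dots> \<le> m"
    using card_image_le[of "{..<m}" \<alpha>] by simp
  finally show "dim V \<le> m" .
next
  have inj: "inj_on v {..<m}"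
  proof (rule inj_onI, rule ccontr)
    fix a b assume ab: "a \<in> {..<m}" "b \<in> {..<m}" "v a = v b" "a \<noteq> b"
    define \<mu> where "\<mu> t = (if t = a then 1 else if t = b then -1 else 0 :: 'a)" for t
    have "(\<Sum>t<m. \<mu> t *s v t) = (\<Sum>t<m. (if t = a then v a else 0) - (if t = b then v b else 0))"
      using ab by (intro sum.cong refl) (auto simp: \<mu>_def scale_minus_left)
    also have "\<dots> = 0"
      using ab by (simp add: sum_subtractf)
    finally have "\<mu> a = 0"
      using indep ab by blast
    then show False
      by (simp add: \<mu>_def)
  qed
  have "independent (v ` {..<m})"
  proof (rule independent_if_scalars_zero)
    fix f x assume "(\<Sum>y\<in>v ` {..<m}. f y *s y) = 0" "x \<in> v ` {..<m}"
    then show "f x = 0"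
      using indep[of "\<lambda>t. f (v t)"] by (auto simp: sum.reindex[OF inj])
  qed simp
  obtain B where B: "B \<subseteq> V" "independent B" "V \<subseteq> span B" "card B = dim V"
    using basis_exists by blast
  have "finite B"
    using independent_span_bound[of "\<alpha> ` {..<m}" B] B spanning by auto
  then have "card (v ` {..<m}) \<le> card B"
    using independent_span_bound[of B "v ` {..<m}"] \<open>independent (v ` {..<m})\<close> family B(3) by auto
  then show "m \<le> dim V"
    using card_image[OF inj] B(4) by simp
qed

text \<open>Specialisation to z = 1: qcoeff c n j is the coefficient of w^j in p(1,w), and the numerator
  becomes a polynomial in e with coefficients N_s(w) = p(1,w) conj(q_s) - pt(1,w) q_(m-s).\<close>

definition qcoeff :: "(nat \<Rightarrow> nat \<Rightarrow> complex) \<Rightarrow> nat \<Rightarrow> nat \<Rightarrow> complex" where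
  "qcoeff c n j = (\<Sum>i\<le>n. c i j)"

lemma bpoly_at_one: "bpoly c n m 1 w = (\<Sum>j\<le>m. qcoeff c n j * w^j)"
  unfolding bpoly_def qcoeff_def sum_distrib_right by (simp add: sum.swap[of _ "{..n}"])

lemma brefl_at_one: "brefl c n m 1 w = (\<Sum>j\<le>m. cnj (qcoeff c n j) * w^(m-j))"
  unfolding brefl_def qcoeff_def sum_distrib_right cnj_sum by (simp add: sum.swap[of _ "{..n}"])

lemma Lnum_at_one:
  "Lnum c n m 1 w e
     = (\<Sum>s\<le>m. (bpoly c n m 1 w * cnj (qcoeff c n s) - brefl c n m 1 w * qcoeff c n (m-s)) * e^s)"
proof -
  have p: "p_reflz c n m 1 e = (\<Sum>j\<le>m. cnj (qcoeff c n j) * e^j)"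
    unfolding p_reflz_def qcoeff_def sum_distrib_right cnj_sum by (simp add: sum.swap[of _ "{..n}"])
  have "pt_reflz c n m 1 e = (\<Sum>j\<le>m. qcoeff c n j * e^(m-j))"
    unfolding pt_reflz_def qcoeff_def sum_distrib_right by (simp add: sum.swap[of _ "{..n}"])
  also have "\<dots> = (\<Sum>s\<le>m. qcoeff c n (m-s) * e^s)"
    by (rule sum.reindex_bij_witness[where i="\<lambda>s. m - s" and j="\<lambda>s. m - s"]) auto
  finally have pt: "pt_reflz c n m 1 e = (\<Sum>s\<le>m. qcoeff c n (m-s) * e^s)" .
  show ?thesis
    unfolding Lnum_def p pt sum_distrib_left sum_subtractf[symmetric]
    by (intro sum.cong refl) (simp add: algebra_simps)
qed

text \<open>Stability at (1,0) shows that p(1,.) has nonzero constant term.\<close>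

lemma qcoeff_0_nonzero:
  assumes "stable c n m"
  shows "qcoeff c n 0 \<noteq> 0"
proof -
  have "qcoeff c n 0 = bpoly c n m 1 0"
    by (simp add: bpoly_at_one power_0_left if_distrib[where f="\<lambda>x. _ * x"] cong: if_cong)
  then show ?thesis
    using assms by (simp add: stable_def)
qed

lemma tcoeff_Lpoly_at_one:
  assumes m: "m \<ge> 1" and L: "\<And>z w e. Lpoly c n m z w e = tpoly l (2*n) (m-1) (m-1) z w e"
    and s: "s < m"
  shows "tcoeff l (2*n) (m-1) s 1 w
       = (\<Sum>k\<le>s. w^(s-k) * (bpoly c n m 1 w * cnj (qcoeff c n k) - brefl c n m 1 w * qcoeff c n (m-k)))"
proof (rule coeffs_of_geometric_quotient[OF m _ s])
  fix e
  show "(1 - w*e) * (\<Sum>k\<le>m-1. tcoeff l (2*n) (m-1) k 1 w * e^k)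
      = (\<Sum>s\<le>m. (bpoly c n m 1 w * cnj (qcoeff c n s) - brefl c n m 1 w * qcoeff c n (m-s)) * e^s)"
    using Lpoly_mult[of w e c n m 1] unfolding L tpoly_tcoeff Lnum_at_one .
qed

text \<open>The m coefficient functions a_s(1,.) are linearly independent: a vanishing combination
  sum u_s a_s(1,w) equals p(1,w) B(w) - pt(1,w) A(w) for polynomials A, B of degree < m, so
  B = 0 by the one-variable cancellation lemma, and then u = 0 by triangularity.\<close>

lemma Lpoly_coeffs_independent:
  assumes m: "m \<ge> 1" and st: "stable c n m"
    and L: "\<And>z w e. Lpoly c n m z w e = tpoly l (2*n) (m-1) (m-1) z w e"
    and u: "\<And>w. (\<Sum>s<m. u s * tcoeff l (2*n) (m-1) s 1 w) = 0"
  shows "\<forall>s<m. u s = 0"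
proof -
  let ?q = "qcoeff c n"
  define P where "P = (\<Sum>j\<le>m. monom (?q j) j)"
  define Q where "Q = (\<Sum>j\<le>m. monom (cnj (?q j)) (m-j))"
  define A where "A = trunc_conv u (\<lambda>k. ?q (m-k)) m"
  define B where "B = trunc_conv u (\<lambda>k. cnj (?q k)) m"
  have poly_P: "poly P x = bpoly c n m 1 x" for x
    by (simp add: P_def bpoly_at_one poly_sum poly_monom)
  have poly_Q: "poly Q x = brefl c n m 1 x" for x
    by (simp add: Q_def brefl_at_one poly_sum poly_monom)
  have "poly (P * B - Q * A) w = (\<Sum>s<m. u s * tcoeff l (2*n) (m-1) s 1 w)" for w
  proof -
    have "poly (P * B - Q * A) w = (\<Sum>s<m. u s * (\<Sum>k\<le>s. w^(s-k)
            * (bpoly c n m 1 w * cnj (?q k) - brefl c n m 1 w * ?q (m-k))))"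
      by (simp add: poly_P poly_Q A_def B_def poly_trunc_conv sum_distrib_left
          sum_subtractf[symmetric] algebra_simps)
    also have "\<dots> = (\<Sum>s<m. u s * tcoeff l (2*n) (m-1) s 1 w)"
      using tcoeff_Lpoly_at_one[OF m L] by (intro sum.cong refl) simp
    finally show ?thesis .
  qed
  then have "P * B = Q * A"
    using u poly_eq_poly_eq_iff[of "P * B - Q * A" 0] by (simp add: fun_eq_iff)
  moreover have "coeff Q m = cnj (?q 0)"
  proof -
    have "coeff Q m = (\<Sum>j\<le>m. if j = 0 then cnj (?q j) else 0)"
      unfolding Q_def coeff_sum coeff_monom by (intro sum.cong refl) auto
    then show ?thesis
      by simp
  qed
  ultimately have "B = 0"
    using st qcoeff_0_nonzero[OF st] bpoly_reflect[of 1 _ n m c] degree_trunc_conv[OF m]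
    by (intro stable_poly_cancel_reflection[of P Q m B A]) (auto simp: stable_def poly_P poly_Q B_def)
  then show ?thesis
    using trunc_conv_eq_0[of u _ m] qcoeff_0_nonzero[OF st] unfolding B_def by simp
qed

text \<open>Part (2): the span of the functions L(.,.;eta) has dimension exactly m; it is spanned by the
  coefficients a_k, and the values at eta = 0, ..., m - 1 are independent by the previous lemma and
  the Vandermonde argument.\<close>

lemma dim_Lpoly_family:
  assumes m: "m \<ge> 1" and st: "stable c n m"
    and L: "\<And>z w e. Lpoly c n m z w e = tpoly l (2*n) (m-1) (m-1) z w e"
  shows "vector_space.dim (fscale :: complex \<Rightarrow> (complex \<times> complex \<Rightarrow> complex) \<Rightarrow> _)
           (range (\<lambda>\<eta>. \<lambda>(z, w). tpoly l (2*n) (m-1) (m-1) z w (cnj \<eta>))) = m"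
proof -
  interpret fs: vector_space "fscale :: complex \<Rightarrow> (complex \<times> complex \<Rightarrow> complex) \<Rightarrow> _"
    by (rule vector_space_fscale)
  have lessThan_m: "{..m-1} = {..<m}"
    using m by auto
  define \<alpha> where "\<alpha> k = (\<lambda>(z, w). tcoeff l (2*n) (m-1) k z w)" for k
  define v where "v t = (\<lambda>(z, w). tpoly l (2*n) (m-1) (m-1) z w (of_nat t))" for t :: nat
  have expand: "(\<lambda>(z, w). tpoly l (2*n) (m-1) (m-1) z w e) = (\<Sum>k<m. fscale (e^k) (\<alpha> k))" for e
    unfolding tpoly_tcoeff lessThan_m by (auto simp: fun_eq_iff sum_fun_apply fscale_def \<alpha>_def mult.commute)
  show ?thesis
  proof (rule fs.dim_eq_of_independent_family)
    show "range (\<lambda>\<eta>. \<lambda>(z, w). tpoly l (2*n) (m-1) (m-1) z w (cnj \<eta>)) \<subseteq> fs.span (\<alpha> ` {..<m})"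
      unfolding expand by (auto intro: fs.span_sum[OF fs.span_scale[OF fs.span_base]])
    show "v ` {..<m} \<subseteq> range (\<lambda>\<eta>. \<lambda>(z, w). tpoly l (2*n) (m-1) (m-1) z w (cnj \<eta>))"
      unfolding v_def by (auto intro!: image_eqI[of _ _ "of_nat _"])
  next
    fix \<mu> assume vanish: "(\<Sum>t<m. fscale (\<mu> t) (v t)) = 0"
    define u where "u k = (\<Sum>t<m. \<mu> t * of_nat t ^ k)" for k
    have "(\<Sum>k<m. u k * tcoeff l (2*n) (m-1) k 1 w) = 0" for w
    proof -
      have "0 = (\<Sum>t<m. fscale (\<mu> t) (v t)) (1, w)"
        using vanish by simp
      also have "\<dots> = (\<Sum>t<m. \<Sum>k<m. \<mu> t * of_nat t ^ k * tcoeff l (2*n) (m-1) k 1 w)"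
        unfolding v_def expand by (simp add: sum_fun_apply fscale_def \<alpha>_def sum_distrib_left mult_ac)
      also have "\<dots> = (\<Sum>k<m. \<Sum>t<m. \<mu> t * of_nat t ^ k * tcoeff l (2*n) (m-1) k 1 w)"
        by (rule sum.swap)
      also have "\<dots> = (\<Sum>k<m. u k * tcoeff l (2*n) (m-1) k 1 w)"
        by (simp add: u_def sum_distrib_right)
      finally show ?thesis ..
    qed
    then have "\<forall>k<m. u k = 0"
      by (rule Lpoly_coeffs_independent[OF m st L])
    then show "\<forall>t<m. \<mu> t = 0"
      using vandermonde_injective[of m \<mu>] unfolding u_def by blast
  qed
qed

text \<open>The main theorem.\<close>

theorem mainTheorem2:
  fixes c :: "nat \<Rightarrow> nat \<Rightarrow> complex" and n m :: nat
  assumes "n \<ge> 1" and "m \<ge> 1"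
    and "has_bidegree c n m" and "stable c n m"
  shows "\<exists>l :: nat \<Rightarrow> nat \<Rightarrow> nat \<Rightarrow> complex.
     (\<forall>z w \<eta>. z \<noteq> 0 \<longrightarrow> w * cnj \<eta> \<noteq> 1 \<longrightarrow>
         Lfun c n m z w \<eta> = tpoly l (2*n) (m-1) (m-1) z w (cnj \<eta>))
   \<and> vector_space.dim (fscale :: complex \<Rightarrow> (complex \<times> complex \<Rightarrow> complex) \<Rightarrow> _)
       (range (\<lambda>\<eta>. \<lambda>(z, w). tpoly l (2*n) (m-1) (m-1) z w (cnj \<eta>))) = m
   \<and> (\<forall>z w \<eta>. z \<noteq> 0 \<longrightarrow> w \<noteq> 0 \<longrightarrow> \<eta> \<noteq> 0 \<longrightarrow>
         tpoly l (2*n) (m-1) (m-1) z w (cnj \<eta>) =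
         z ^ (2*n) * (w * cnj \<eta>) ^ (m-1) *
         cnj (tpoly l (2*n) (m-1) (m-1) (1 / cnj z) (1 / cnj w) (cnj (1 / cnj \<eta>))))
   \<and> (\<forall>k\<le>m-1. \<forall>z w. z \<noteq> 0 \<longrightarrow> w \<noteq> 0 \<longrightarrow>
         tcoeff l (2*n) (m-1) k z w =
         z ^ (2*n) * w ^ (m-1) * cnj (tcoeff l (2*n) (m-1) (m-k-1) (1 / cnj z) (1 / cnj w)))
   \<and> (\<exists>A B :: nat \<Rightarrow> nat \<Rightarrow> nat \<Rightarrow> complex. \<forall>z w \<eta>.
         tpoly l (2*n) (m-1) (m-1) z w (cnj \<eta>) =
         bpoly c n m z w * tpoly A n (m-1) (m-1) z w (cnj \<eta>)
         + brefl c n m z w * tpoly B n (m-1) (m-1) z w (cnj \<eta>))"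
proof -
  obtain l where L: "\<And>z w e. Lpoly c n m z w e = tpoly l (2*n) (m-1) (m-1) z w e"
    using is_tpoly_Lpoly unfolding is_tpoly_def by blast
  obtain lA where A: "\<And>z w e. Apoly c n m z w e = tpoly lA n (m-1) (m-1) z w e"
    using is_tpoly_Apoly unfolding is_tpoly_def by blast
  obtain lB where B: "\<And>z w e. Bpoly c n m z w e = tpoly lB n (m-1) (m-1) z w e"
    using is_tpoly_Bpoly unfolding is_tpoly_def by blast
  show ?thesis
  proof (rule exI[of _ l], intro conjI allI impI)
    show "Lfun c n m z w \<eta> = tpoly l (2*n) (m-1) (m-1) z w (cnj \<eta>)"
      if "z \<noteq> 0" "w * cnj \<eta> \<noteq> 1" for z w \<eta>
      using Lfun_eq_Lpoly[OF that] L by simp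
    show "vector_space.dim (fscale :: complex \<Rightarrow> (complex \<times> complex \<Rightarrow> complex) \<Rightarrow> _)
        (range (\<lambda>\<eta>. \<lambda>(z, w). tpoly l (2*n) (m-1) (m-1) z w (cnj \<eta>))) = m"
      using dim_Lpoly_family[OF assms(2,4) L] .
    show "tpoly l (2*n) (m-1) (m-1) z w (cnj \<eta>) = z ^ (2*n) * (w * cnj \<eta>) ^ (m-1) *
        cnj (tpoly l (2*n) (m-1) (m-1) (1 / cnj z) (1 / cnj w) (cnj (1 / cnj \<eta>)))"
      if "z \<noteq> 0" "w \<noteq> 0" "\<eta> \<noteq> 0" for z w \<eta>
      using tpoly_reflect[OF assms(2) L, of z w "cnj \<eta>"] that by simp
    show "tcoeff l (2*n) (m-1) k z w =
        z ^ (2*n) * w ^ (m-1) * cnj (tcoeff l (2*n) (m-1) (m-k-1) (1 / cnj z) (1 / cnj w))"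
      if "k \<le> m-1" "z \<noteq> 0" "w \<noteq> 0" for k z w
      using tcoeff_reflect[OF assms(2) L that(2,3,1)] .
    show "\<exists>A B. \<forall>z w \<eta>. tpoly l (2*n) (m-1) (m-1) z w (cnj \<eta>) =
        bpoly c n m z w * tpoly A n (m-1) (m-1) z w (cnj \<eta>)
        + brefl c n m z w * tpoly B n (m-1) (m-1) z w (cnj \<eta>)"
      using tpoly_decomposition[OF L A B] by blast
  qed
qed


end
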